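(* Let $W:\mathcal X\to\mathcal Y$ be a DMC with $|\mathcal Y|>2|\mathcal X|$, let $L\ge 2|\mathcal X|$ be an integer, and fix any input distribution. Then $$\Delta I^\ast_{\mathrm{deg}}=\min_{Q\preccurlyeq W,\ |Q|\le L}\big(I(W)-I(Q)\big)\le \nu(|\mathcal X|)\, L^{-\frac{2}{|\mathcal X|-1}},$$ so in particular $\Delta I^\ast_{\mathrm{deg}}=O\big(L^{-2/(|\mathcal X|-1)}\big)$. Moreover, the channel $Q$ produced by the greedy-merge algorithm satisfies $I(W)-I(Q)\le \nu(|\mathcal X|)\,L^{-\frac{2}{|\mathcal X|-1}}$.
   Context: $\mathcal X,\mathcal Y$ are finite disjoint sets with $|\mathcal X|\ge 2$; $W:\mathcal X\to\mathcal Y$ is a discrete memoryless channel (DMC) with transition probabilities $W(y|x)$. An input distribution $\pi(x)>0$ on $\mathcal X$ is fixed, and the output probabilities $\pi(y)=\sum_x\pi(x)W(y|x)$ are assumed positive. $I(W)$ is the mutual information between the input and output of $W$ under this input distribution (natural logarithm); for any other channel with input alphabet $\mathcal X$ the same input distribution is used. A channel $Q:\mathcal X\to\mathcal Z$ is degraded with respect to $W$, written $Q\preccurlyeq W$, if there is a channel $\Phi:\mathcal Y\to\mathcal Z$ with $Q(z|x)=\sum_{y}W(y|x)\Phi(z|y)$ for all $x,z$. $|Q|$ denotes the output alphabet size of $Q$. Merging two distinct output letters $\alpha,\beta$ of a channel $W$ produces the channel $Q$ with output alphabet $(\mathcal Y\setminus\{\alpha,\beta\})\cup\{\gamma\}$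 ($\gamma$ a new symbol), $Q(\gamma|x)=W(\alpha|x)+W(\beta|x)$ and $Q(y|x)=W(y|x)$ for all other $y$. Greedy-merge: starting from $W$, repeatedly merge the pair of output letters whose merger gives the smallest decrease in mutual information, until the output alphabet has $L$ letters. The constant is $$\nu(n)=\frac{\pi n(n-1)}{2\left(\sqrt{1+\frac{1}{2(n-1)}}-1\right)^2}\left(\frac{2n}{\Gamma\!\left(1+\frac{n-1}{2}\right)}\right)^{\frac{2}{n-1}},$$ where $\pi$ here is the number $3.14159\ldots$ and $\Gamma$ is the Gamma function. *)

theory Defs
  imports "HOL-Analysis.Analysis"
begin

definition is_channel :: "'a set \<Rightarrow> 'b set \<Rightarrow> ('a \<Rightarrow> 'b \<Rightarrow> real) \<Rightarrow> bool" where
  "is_channel X Z V \<longleftrightarrow> (\<forall>x\<in>X. (\<forall>z\<in>Z. V x z \<ge> 0) \<and> (\<Sum>z\<in>Z. V x z) = 1)"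

definition out_prob :: "('x \<Rightarrow> real) \<Rightarrow> 'x set \<Rightarrow> ('x \<Rightarrow> 'z \<Rightarrow> real) \<Rightarrow> 'z \<Rightarrow> real" where
  "out_prob p X V z = (\<Sum>x\<in>X. p x * V x z)"

definition mutual_info :: "('x \<Rightarrow> real) \<Rightarrow> 'x set \<Rightarrow> 'z set \<Rightarrow> ('x \<Rightarrow> 'z \<Rightarrow> real) \<Rightarrow> real" where
  "mutual_info p X Z V =
     (\<Sum>x\<in>X. \<Sum>z\<in>Z. if p x * V x z = 0 then 0
                       else p x * V x z * ln (V x z / out_prob p X V z))"

definition degraded :: "'x set \<Rightarrow> 'y set \<Rightarrow> 'z set \<Rightarrow> ('x \<Rightarrow> 'z \<Rightarrow> real) \<Rightarrow> ('x \<Rightarrow> 'y \<Rightarrow> real) \<Rightarrow> bool" where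
  "degraded X Y Z Q W \<longleftrightarrow>
     (\<exists>\<Phi>. is_channel Y Z \<Phi> \<and> (\<forall>x\<in>X. \<forall>z\<in>Z. Q x z = (\<Sum>y\<in>Y. W x y * \<Phi> y z)))"

definition nu :: "nat \<Rightarrow> real" where
  "nu n = (pi * real n * (real n - 1)) / (2 * (sqrt (1 + 1 / (2 * (real n - 1))) - 1)^2)
          * (2 * real n / Gamma (1 + (real n - 1) / 2)) powr (2 / (real n - 1))"

text \<open>Merged channels: an output alphabet obtained by merging letters of Y is a
  partition P of Y; the merged letter S \<in> P has Q(S|x) = sum over y in S of W(y|x).\<close>
definition merged_channel :: "('x \<Rightarrow> 'y \<Rightarrow> real) \<Rightarrow> 'x \<Rightarrow> 'y set \<Rightarrow> real" where
  "merged_channel W x S = (\<Sum>y\<in>S. W x y)"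

definition merge_blocks :: "'y set set \<Rightarrow> 'y set \<Rightarrow> 'y set \<Rightarrow> 'y set set" where
  "merge_blocks P A B = insert (A \<union> B) (P - {A, B})"

definition greedy_step :: "('x \<Rightarrow> real) \<Rightarrow> 'x set \<Rightarrow> ('x \<Rightarrow> 'y \<Rightarrow> real) \<Rightarrow> 'y set set \<Rightarrow> 'y set set \<Rightarrow> bool" where
  "greedy_step p X W P P' \<longleftrightarrow>
     (\<exists>A\<in>P. \<exists>B\<in>P. A \<noteq> B \<and> P' = merge_blocks P A B \<and>
        (\<forall>A'\<in>P. \<forall>B'\<in>P. A' \<noteq> B' \<longrightarrow>
           mutual_info p X P (merged_channel W) - mutual_info p X P' (merged_channel W)
           \<le> mutual_info p X P (merged_channel W)
              - mutual_info p X (merge_blocks P A' B') (merged_channel W)))"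

inductive greedy_reach :: "('x \<Rightarrow> real) \<Rightarrow> 'x set \<Rightarrow> 'y set \<Rightarrow> ('x \<Rightarrow> 'y \<Rightarrow> real) \<Rightarrow> nat \<Rightarrow> 'y set set \<Rightarrow> bool"
  for p X Y W L where
  init: "greedy_reach p X Y W L ((\<lambda>y. {y}) ` Y)"
| step: "greedy_reach p X Y W L P \<Longrightarrow> card P > L \<Longrightarrow> greedy_step p X W P P'
         \<Longrightarrow> greedy_reach p X Y W L P'"

definition greedy_merge_output :: "('x \<Rightarrow> real) \<Rightarrow> 'x set \<Rightarrow> 'y set \<Rightarrow> ('x \<Rightarrow> 'y \<Rightarrow> real) \<Rightarrow> nat \<Rightarrow> 'y set set \<Rightarrow> bool" where
  "greedy_merge_output p X Y W L P \<longleftrightarrow> greedy_reach p X Y W L P \<and> card P \<le> L"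

end

theory Submission
  imports Defs
begin

text \<open>
  The mutual information is a sum over output letters of a contribution that depends only on the
  letter's joint column \<open>j(x) = p(x) W(y|x)\<close>. By \<open>ln t \<le> t - 1\<close>, merging two letters of weights
  \<open>s, s'\<close> loses at most \<open>2 max(s, s')\<close> times the squared distance between the unit vectors
  \<open>sqrt(j/s)\<close> and \<open>sqrt(j'/s')\<close>. With \<open>M > 2|X|\<close> letters, more than \<open>M/2\<close> of them weigh at most
  \<open>2/M\<close>; fixing for each of these a coordinate of size at least \<open>|X|^(-1/2)\<close> and cutting the other
  coordinates into \<open>m \<approx> (M/(2|X|))^(1/(|X|-1))\<close> intervals, the pigeonhole principle yields two whose
  vectors are \<open>O(m^(-2))\<close> apart. Hence the cheapest merger, and so the greedy one, costs
  \<open>O(M^(-1-d))\<close> with \<open>d = 2/(|X|-1)\<close>, and summing from \<open>|Y|\<close> letters down to \<open>L\<close> telescopes to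
  \<open>O(L^(-d))\<close>; \<open>\<Gamma>(1 + k/2) \<le> (1 + k/2)^(k/2)\<close> bounds the constant by \<open>\<nu>(|X|)\<close>. A merged channel
  is degraded (post-processing by a deterministic channel), which gives the first claim.
\<close>

section \<open>Loss of merging two output letters\<close>

lemma xlnx_sub_ln_le:
  fixes a r s :: real
  assumes "a \<ge> 0" "r > 0" "s > 0"
  shows "(if a = 0 then 0 else a * ln (a / r)) - a * ln s \<le> a * (a / (r * s) - 1)"
proof (cases "a = 0")
  case False
  then have "a > 0" using assms(1) by simp
  then have "ln (a / r) - ln s = ln (a / (r * s))"
    using assms by (simp add: ln_div ln_mult)
  also have "\<dots> \<le> a / (r * s) - 1"
    using \<open>a > 0\<close> assms by (intro ln_le_minus_one) simp
  finally show ?thesis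
    using False \<open>a > 0\<close> by (simp add: right_diff_distrib[symmetric] mult_left_mono)
qed simp

lemma merge_loss_le_chi_square:
  fixes a b sa sb c :: real
  assumes "a \<ge> 0" "b \<ge> 0" "sa > 0" "sb > 0" "c > 0"
  shows "(if a = 0 then 0 else a * ln (a / (c * sa))) + (if b = 0 then 0 else b * ln (b / (c * sb)))
         - (if a + b = 0 then 0 else (a + b) * ln ((a + b) / (c * (sa + sb))))
         \<le> (sa + sb) * (a\<^sup>2 / sa + b\<^sup>2 / sb) / (a + b) - (a + b)"
proof (cases "a + b = 0")
  case False
  with assms have ab: "a + b > 0" by simp
  define s where "s = (a + b) / (c * (sa + sb))"
  have "s > 0" using ab assms by (simp add: s_def)
  have "(if a = 0 then 0 else a * ln (a / (c * sa))) + (if b = 0 then 0 else b * ln (b / (c * sb)))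
         - (a + b) * ln s
      = ((if a = 0 then 0 else a * ln (a / (c * sa))) - a * ln s)
        + ((if b = 0 then 0 else b * ln (b / (c * sb))) - b * ln s)"
    by (simp add: algebra_simps)
  also have "\<dots> \<le> a * (a / (c * sa * s) - 1) + b * (b / (c * sb * s) - 1)"
    using assms \<open>s > 0\<close> by (intro add_mono xlnx_sub_ln_le) auto
  also have "\<dots> = a * (a * (sa + sb) / (sa * (a + b)) - 1) + b * (b * (sa + sb) / (sb * (a + b)) - 1)"
    using assms by (simp add: s_def)
  also have "\<dots> = (sa + sb) * (a\<^sup>2 / sa + b\<^sup>2 / sb) / (a + b) - (a + b)"
  proof -
    have h: "x * (x * S / (r * t) - 1) = S * (x\<^sup>2 / r) / t - x" for x S r t :: real
      by (simp add: power2_eq_square right_diff_distrib)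
    show ?thesis unfolding h by (simp add: distrib_left add_divide_distrib)
  qed
  finally show ?thesis using False by (simp add: s_def)
qed (use assms in auto)

lemma chi_square_excess_le_hellinger:
  fixes a b sa sb :: real
  assumes "a \<ge> 0" "b \<ge> 0" "sa > 0" "sb > 0"
  shows "(sa + sb) * (a\<^sup>2 / sa + b\<^sup>2 / sb) / (a + b) - (a + b)
         \<le> 2 * max sa sb * (sqrt (a / sa) - sqrt (b / sb))\<^sup>2"
proof (cases "a + b = 0")
  case False
  define u where "u = sqrt (a / sa)"
  define w where "w = sqrt (b / sb)"
  have a: "a = sa * u\<^sup>2" using assms by (simp add: u_def)
  have b: "b = sb * w\<^sup>2" using assms by (simp add: w_def)
  have D: "a + b > 0" using False assms by simp
  have "(sa + sb) * (a\<^sup>2 / sa + b\<^sup>2 / sb) / (a + b) - (a + b)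
        = sa * sb * (u - w)\<^sup>2 * (u + w)\<^sup>2 / (a + b)"
    using D assms unfolding a b by (simp add: field_simps power2_eq_square)
  also have "\<dots> = (u - w)\<^sup>2 * (sa * sb * (u + w)\<^sup>2 / (a + b))"
    by simp
  also have "\<dots> \<le> (u - w)\<^sup>2 * (2 * max sa sb)"
  proof (rule mult_left_mono)
    have "sa * sb * (u + w)\<^sup>2 \<le> sa * sb * (2 * (u\<^sup>2 + w\<^sup>2))"
      using assms zero_le_power2[of "u - w"] by (intro mult_left_mono) (auto simp: power2_sum power2_diff)
    also have "\<dots> = 2 * (sb * (sa * u\<^sup>2) + sa * (sb * w\<^sup>2))"
      by (simp add: algebra_simps)
    also have "\<dots> \<le> 2 * (max sa sb * (sa * u\<^sup>2) + max sa sb * (sb * w\<^sup>2))"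
      using assms by (intro mult_left_mono add_mono mult_right_mono) auto
    also have "\<dots> = 2 * max sa sb * (a + b)"
      unfolding a b by (simp add: algebra_simps)
    finally show "sa * sb * (u + w)\<^sup>2 / (a + b) \<le> 2 * max sa sb"
      using D by (simp add: divide_le_eq)
  qed simp
  finally show ?thesis by (simp add: u_def w_def mult.commute)
qed (use assms in auto)

definition letter_info :: "('x \<Rightarrow> real) \<Rightarrow> 'x set \<Rightarrow> ('x \<Rightarrow> real) \<Rightarrow> real" where
  "letter_info p X j = (\<Sum>x\<in>X. if j x = 0 then 0 else j x * ln (j x / (p x * sum j X)))"

lemma mutual_info_eq_sum_letter_info:
  assumes "\<forall>x\<in>X. p x > 0"
  shows "mutual_info p X Z V = (\<Sum>z\<in>Z. letter_info p X (\<lambda>x. p x * V x z))"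
  unfolding mutual_info_def letter_info_def out_prob_def
  by (subst sum.swap) (intro sum.cong refl, use assms in auto)

lemma merge_loss_le_hellinger:
  fixes a b :: "'x \<Rightarrow> real"
  assumes "finite X" "\<forall>x\<in>X. p x > 0" "\<forall>x\<in>X. a x \<ge> 0" "\<forall>x\<in>X. b x \<ge> 0"
    "sum a X > 0" "sum b X > 0"
  shows "letter_info p X a + letter_info p X b - letter_info p X (\<lambda>x. a x + b x)
    \<le> 2 * max (sum a X) (sum b X) * (\<Sum>x\<in>X. (sqrt (a x / sum a X) - sqrt (b x / sum b X))\<^sup>2)"
proof -
  let ?sa = "sum a X" and ?sb = "sum b X"
  have "letter_info p X a + letter_info p X b - letter_info p X (\<lambda>x. a x + b x) =
    (\<Sum>x\<in>X. (if a x = 0 then 0 else a x * ln (a x / (p x * ?sa)))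
       + (if b x = 0 then 0 else b x * ln (b x / (p x * ?sb)))
       - (if a x + b x = 0 then 0 else (a x + b x) * ln ((a x + b x) / (p x * (?sa + ?sb)))))"
    unfolding letter_info_def sum.distrib by (simp add: sum.distrib[symmetric] sum_subtractf)
  also have "\<dots> \<le> (\<Sum>x\<in>X. 2 * max ?sa ?sb * (sqrt (a x / ?sa) - sqrt (b x / ?sb))\<^sup>2)"
    using assms
    by (intro sum_mono order_trans[OF merge_loss_le_chi_square chi_square_excess_le_hellinger]) auto
  finally show ?thesis by (simp add: sum_distrib_left)
qed

section \<open>Close pairs of nonnegative unit vectors\<close>

lemma unit_vectors_coord_sq_gap_le:
  fixes a b :: "'x \<Rightarrow> real"
  assumes "finite X" "x0 \<in> X" "(\<Sum>x\<in>X. (a x)\<^sup>2) = 1" "(\<Sum>x\<in>X. (b x)\<^sup>2) = 1"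
  shows "((a x0)\<^sup>2 - (b x0)\<^sup>2)\<^sup>2 \<le> 4 * (\<Sum>x\<in>X - {x0}. (a x - b x)\<^sup>2)"
proof -
  let ?R = "X - {x0}"
  have ra: "(\<Sum>x\<in>?R. (a x)\<^sup>2) = 1 - (a x0)\<^sup>2"
    using assms(3) sum.remove[OF assms(1,2), of "\<lambda>x. (a x)\<^sup>2"] by simp
  have rb: "(\<Sum>x\<in>?R. (b x)\<^sup>2) = 1 - (b x0)\<^sup>2"
    using assms(4) sum.remove[OF assms(1,2), of "\<lambda>x. (b x)\<^sup>2"] by simp
  have "(\<Sum>x\<in>?R. (b x - a x) * (b x + a x)) = (\<Sum>x\<in>?R. (b x)\<^sup>2) - (\<Sum>x\<in>?R. (a x)\<^sup>2)"
    by (simp add: sum_subtractf[symmetric] power2_eq_square algebra_simps)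
  then have "(a x0)\<^sup>2 - (b x0)\<^sup>2 = (\<Sum>x\<in>?R. (b x - a x) * (b x + a x))"
    using ra rb by simp
  then have "((a x0)\<^sup>2 - (b x0)\<^sup>2)\<^sup>2 \<le> (\<Sum>x\<in>?R. (b x - a x)\<^sup>2) * (\<Sum>x\<in>?R. (b x + a x)\<^sup>2)"
    by (simp only: Cauchy_Schwarz_ineq_sum)
  also have "\<dots> \<le> (\<Sum>x\<in>?R. (a x - b x)\<^sup>2) * 4"
  proof (rule mult_mono)
    have "(\<Sum>x\<in>?R. (b x + a x)\<^sup>2) \<le> (\<Sum>x\<in>?R. 2 * ((a x)\<^sup>2 + (b x)\<^sup>2))"
    proof (rule sum_mono)
      fix x
      show "(b x + a x)\<^sup>2 \<le> 2 * ((a x)\<^sup>2 + (b x)\<^sup>2)"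
        using sum_squares_bound[of "b x" "a x"] unfolding power2_sum by (smt (verit))
    qed
    also have "\<dots> = 2 * ((1 - (a x0)\<^sup>2) + (1 - (b x0)\<^sup>2))"
      unfolding ra[symmetric] rb[symmetric] by (simp add: sum.distrib sum_distrib_left)
    also have "\<dots> \<le> 4" by simp
    finally show "(\<Sum>x\<in>?R. (b x + a x)\<^sup>2) \<le> 4" .
  qed (auto simp: power2_commute intro: sum_nonneg)
  finally show ?thesis by simp
qed

lemma unit_vectors_heavy_coord_diff_le:
  fixes a b :: "'x \<Rightarrow> real" and n :: real
  assumes "finite X" "x0 \<in> X" "\<forall>x\<in>X. a x \<ge> 0" "\<forall>x\<in>X. b x \<ge> 0"
    "(\<Sum>x\<in>X. (a x)\<^sup>2) = 1" "(\<Sum>x\<in>X. (b x)\<^sup>2) = 1" "n > 0"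
    "(a x0)\<^sup>2 \<ge> 1 / n" "(b x0)\<^sup>2 \<ge> 1 / n"
  shows "(a x0 - b x0)\<^sup>2 \<le> n * (\<Sum>x\<in>X - {x0}. (a x - b x)\<^sup>2)"
proof -
  have "a x0 \<ge> 0" "b x0 \<ge> 0" using assms(2-4) by auto
  have "(1 / n)\<^sup>2 \<le> (a x0 * b x0)\<^sup>2"
    using mult_mono[OF assms(8,9)] assms(7) by (simp add: power2_eq_square mult_ac)
  then have "a x0 * b x0 \<ge> 1 / n"
    by (rule power2_le_imp_le) (use \<open>a x0 \<ge> 0\<close> \<open>b x0 \<ge> 0\<close> in simp)
  moreover have "4 / n = 1 / n + 1 / n + 2 * (1 / n)" by simp
  ultimately have "(a x0 + b x0)\<^sup>2 \<ge> 4 / n"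
    using assms(8,9) unfolding power2_sum by linarith
  then have "(a x0 - b x0)\<^sup>2 * (4 / n) \<le> (a x0 - b x0)\<^sup>2 * (a x0 + b x0)\<^sup>2"
    by (rule mult_left_mono) simp
  also have "\<dots> = ((a x0)\<^sup>2 - (b x0)\<^sup>2)\<^sup>2"
    unfolding power2_eq_square square_diff_square_factored by (simp add: mult_ac)
  also have "\<dots> \<le> 4 * (\<Sum>x\<in>X - {x0}. (a x - b x)\<^sup>2)"
    by (rule unit_vectors_coord_sq_gap_le[OF assms(1,2,5,6)])
  finally have "(a x0 - b x0)\<^sup>2 * (4 / n) \<le> 4 * (\<Sum>x\<in>X - {x0}. (a x - b x)\<^sup>2)" .
  then show ?thesis
    using assms(7) by (simp add: divide_le_eq mult.commute)
qed

lemma exists_heavy_coord: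
  fixes u :: "'x \<Rightarrow> real"
  assumes "finite X" "X \<noteq> {}" "(\<Sum>x\<in>X. (u x)\<^sup>2) = 1"
  shows "\<exists>x\<in>X. (u x)\<^sup>2 \<ge> 1 / real (card X)"
proof (rule ccontr)
  assume "\<not> ?thesis"
  then have "(\<Sum>x\<in>X. (u x)\<^sup>2) < (\<Sum>x\<in>X. 1 / real (card X))"
    using assms by (intro sum_strict_mono) (auto simp: not_le)
  then show False using assms by simp
qed

lemma unit_vector_coord_le_one:
  fixes u :: "'x \<Rightarrow> real"
  assumes "finite X" "x \<in> X" "(\<Sum>x\<in>X. (u x)\<^sup>2) = 1"
  shows "u x \<le> 1"
proof -
  have "(u x)\<^sup>2 \<le> 1\<^sup>2"
    using member_le_sum[of x X "\<lambda>x. (u x)\<^sup>2"] assms by simp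
  then show ?thesis by (rule power2_le_imp_le) simp
qed

text \<open>Index of the interval of length \<open>1/m\<close> containing \<open>v \<in> [0, 1]\<close>; \<open>v = 1\<close> goes into the last one.\<close>

definition grid_cell :: "nat \<Rightarrow> real \<Rightarrow> nat" where
  "grid_cell m v = min (m - 1) (nat \<lfloor>real m * v\<rfloor>)"

lemma grid_cell_bounds:
  assumes "m \<ge> 1" "0 \<le> v" "v \<le> 1"
  shows "grid_cell m v < m" "real (grid_cell m v) \<le> real m * v" "real m * v \<le> real (grid_cell m v) + 1"
proof -
  have fl: "\<lfloor>real m * v\<rfloor> \<ge> 0" "real m * v \<le> real m" using assms by simp_all
  show "grid_cell m v < m" unfolding grid_cell_def using assms by simp
  have "real (grid_cell m v) \<le> real m * v \<and> real m * v \<le> real (grid_cell m v) + 1"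
  proof (cases "nat \<lfloor>real m * v\<rfloor> \<le> m - 1")
    case True
    then have "grid_cell m v = nat \<lfloor>real m * v\<rfloor>" unfolding grid_cell_def by simp
    then show ?thesis using fl by linarith
  next
    case False
    then have "grid_cell m v = m - 1" unfolding grid_cell_def by simp
    then show ?thesis using False fl assms(1) by linarith
  qed
  then show "real (grid_cell m v) \<le> real m * v" "real m * v \<le> real (grid_cell m v) + 1"
    by simp_all
qed

lemma grid_cell_eq_imp_close:
  assumes "m \<ge> 1" "0 \<le> v" "v \<le> 1" "0 \<le> w" "w \<le> 1" "grid_cell m v = grid_cell m w"
  shows "(v - w)\<^sup>2 \<le> 1 / (real m)\<^sup>2"
proof -
  have "\<bar>real m * (v - w)\<bar> \<le> 1"
    using grid_cell_bounds[OF assms(1-3)] grid_cell_bounds[OF assms(1,4,5)] assms(6)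
    by (simp add: right_diff_distrib)
  then have "(real m)\<^sup>2 * (v - w)\<^sup>2 \<le> 1"
    by (metis abs_le_square_iff abs_one power_mult_distrib one_power2)
  then show ?thesis using assms(1) by (simp add: field_simps)
qed

lemma unit_vectors_same_cells_close:
  fixes a b :: "'x \<Rightarrow> real"
  assumes "finite X" "card X = n" "n \<ge> 2" "m \<ge> 1" "x0 \<in> X"
    and nonneg: "\<forall>x\<in>X. a x \<ge> 0" "\<forall>x\<in>X. b x \<ge> 0"
    and unit: "(\<Sum>x\<in>X. (a x)\<^sup>2) = 1" "(\<Sum>x\<in>X. (b x)\<^sup>2) = 1"
    and heavy: "(a x0)\<^sup>2 \<ge> 1 / real n" "(b x0)\<^sup>2 \<ge> 1 / real n"
    and same_cells: "\<forall>x\<in>X - {x0}. grid_cell m (a x) = grid_cell m (b x)"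
  shows "(\<Sum>x\<in>X. (a x - b x)\<^sup>2) \<le> real (n + 1) * real (n - 1) / (real m)\<^sup>2"
proof -
  let ?D = "\<Sum>x\<in>X - {x0}. (a x - b x)\<^sup>2"
  have "?D \<le> (\<Sum>x\<in>X - {x0}. 1 / (real m)\<^sup>2)"
    using same_cells nonneg unit_vector_coord_le_one[OF assms(1) _ unit(1)]
      unit_vector_coord_le_one[OF assms(1) _ unit(2)]
    by (intro sum_mono grid_cell_eq_imp_close[OF assms(4)]) auto
  also have "\<dots> = real (n - 1) / (real m)\<^sup>2" using assms(1,2,5) by simp
  finally have D: "?D \<le> real (n - 1) / (real m)\<^sup>2" .
  have "(a x0 - b x0)\<^sup>2 \<le> real n * ?D"
    using assms by (intro unit_vectors_heavy_coord_diff_le) auto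
  then have "(\<Sum>x\<in>X. (a x - b x)\<^sup>2) \<le> real (n + 1) * ?D"
    using sum.remove[OF assms(1,5), of "\<lambda>x. (a x - b x)\<^sup>2"] by (simp add: algebra_simps)
  also have "\<dots> \<le> real (n + 1) * (real (n - 1) / (real m)\<^sup>2)"
    using D by (intro mult_left_mono) auto
  finally show ?thesis by simp
qed

lemma exists_close_unit_vectors:
  fixes u :: "'i \<Rightarrow> 'x \<Rightarrow> real" and m n :: nat
  assumes "finite X" "card X = n" "n \<ge> 2" "finite I" "m \<ge> 1"
    and nonneg: "\<forall>i\<in>I. \<forall>x\<in>X. u i x \<ge> 0" and unit: "\<forall>i\<in>I. (\<Sum>x\<in>X. (u i x)\<^sup>2) = 1"
    and many: "card I > n * m ^ (n - 1)"
  shows "\<exists>i\<in>I. \<exists>j\<in>I. i \<noteq> j \<and> (\<Sum>x\<in>X. (u i x - u j x)\<^sup>2) \<le> real (n + 1) * real (n - 1) / (real m)\<^sup>2"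
proof -
  have "X \<noteq> {}" using assms(2,3) by auto
  define heavy where "heavy i = (SOME x. x \<in> X \<and> (u i x)\<^sup>2 \<ge> 1 / real n)" for i
  have heavy: "heavy i \<in> X \<and> (u i (heavy i))\<^sup>2 \<ge> 1 / real n" if "i \<in> I" for i
  proof -
    have "\<exists>x. x \<in> X \<and> (u i x)\<^sup>2 \<ge> 1 / real n"
      using exists_heavy_coord[OF assms(1) \<open>X \<noteq> {}\<close>, of "u i"] unit that assms(2) by auto
    then show ?thesis unfolding heavy_def by (rule someI_ex)
  qed
  \<comment> \<open>Pigeonhole over the heavy coordinate and the grid cells of the remaining \<open>n - 1\<close> coordinates.\<close>
  define cell where "cell i = (heavy i, restrict (\<lambda>x. grid_cell m (u i x)) (X - {heavy i}))" for i
  define T where "T = (SIGMA x0:X. PiE (X - {x0}) (\<lambda>_. {..<m}))"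
  have "cell i \<in> T" if "i \<in> I" for i
  proof -
    have "restrict (\<lambda>x. grid_cell m (u i x)) (X - {heavy i}) \<in> PiE (X - {heavy i}) (\<lambda>_. {..<m})"
      unfolding restrict_PiE_iff using that nonneg unit_vector_coord_le_one[OF assms(1)] unit
        grid_cell_bounds(1)[OF assms(5)] by auto
    then show ?thesis using heavy[OF that] by (simp add: cell_def T_def)
  qed
  then have "cell ` I \<subseteq> T" by auto
  moreover have "finite T"
    unfolding T_def using assms(1) by (intro finite_SigmaI finite_PiE) auto
  ultimately have "card (cell ` I) \<le> card T"
    by (simp add: card_mono)
  also have "card T = n * m ^ (n - 1)"
    using assms(1,2) by (simp add: T_def card_SigmaI card_PiE finite_PiE)
  finally have "\<not> inj_on cell I"
    using many by (intro pigeonhole) simp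
  then obtain i j where ij: "i \<in> I" "j \<in> I" "i \<noteq> j" "cell i = cell j"
    unfolding inj_on_def by blast
  then have "heavy j = heavy i" by (simp add: cell_def)
  moreover have "\<forall>x\<in>X - {heavy i}. grid_cell m (u i x) = grid_cell m (u j x)"
  proof
    fix x assume "x \<in> X - {heavy i}"
    then show "grid_cell m (u i x) = grid_cell m (u j x)"
      using fun_cong[OF arg_cong[OF ij(4), of snd], of x] \<open>heavy j = heavy i\<close> by (simp add: cell_def)
  qed
  ultimately have "(\<Sum>x\<in>X. (u i x - u j x)\<^sup>2) \<le> real (n + 1) * real (n - 1) / (real m)\<^sup>2"
    using heavy[OF ij(1)] heavy[OF ij(2)] nonneg unit ij(1,2)
    by (intro unit_vectors_same_cells_close[OF assms(1,2,3,5), of "heavy i"]) auto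
  then show ?thesis using ij by blast
qed

section \<open>Bounds on the constants\<close>

definition loss_exponent :: "nat \<Rightarrow> real" where
  "loss_exponent n = 2 / (real n - 1)"

definition merge_loss_const :: "nat \<Rightarrow> real" where
  "merge_loss_const n = 16 * ((real n)\<^sup>2 - 1) * (2 * real n) powr loss_exponent n"

lemma powr_neg_decrement_ge:
  fixes x d :: real
  assumes "x > 1" "d > 0"
  shows "d * x powr (- 1 - d) \<le> (x - 1) powr - d - x powr - d"
proof -
  have x: "x > 0" "1 - 1 / x > 0" using assms by (auto simp: field_simps)
  have "ln (1 - 1 / x) \<le> - 1 / x"
    using ln_le_minus_one[OF x(2)] by simp
  then have "d / x \<le> - d * ln (1 - 1 / x)"
    using mult_left_mono[of "ln (1 - 1 / x)" "- 1 / x" d] assms(2) by simp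
  then have "1 + d / x \<le> exp (- d * ln (1 - 1 / x))"
    using exp_ge_add_one_self[of "d / x"] by (metis add.commute exp_le_cancel_iff order_trans)
  also have "\<dots> = (1 - 1 / x) powr - d" using x by (simp add: powr_def)
  finally have "x powr - d * (1 + d / x) \<le> x powr - d * (1 - 1 / x) powr - d"
    by (intro mult_left_mono) auto
  also have "\<dots> = (x - 1) powr - d"
    using x by (simp add: powr_mult[symmetric] right_diff_distrib)
  finally show ?thesis
    using x by (simp add: powr_diff powr_minus_divide field_simps)
qed

lemma Gamma_one_plus_half_le:
  "Gamma (1 + real k / 2) \<le> (1 + real k / 2) powr (real k / 2)"
proof (induction k rule: less_induct)
  case (less k)
  consider "k = 0" | "k = 1" | j where "k = j + 2"
    by (metis One_nat_def add_2_eq_Suc' not0_implies_Suc)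
  then show ?case
  proof cases
    case 2
    have "Gamma (1 / 2 + 1 :: real) = 1 / 2 * Gamma (1 / 2)"
      by (rule Gamma_plus1) (auto dest: nonpos_Ints_nonpos)
    then have "Gamma (1 + real k / 2) = sqrt pi / 2"
      using 2 by (simp add: Gamma_one_half_real add.commute)
    also have "\<dots> \<le> sqrt (3 / 2)"
      using pi_less_4 by (intro real_le_rsqrt) (simp add: power_divide)
    finally show ?thesis using 2 by (simp add: powr_half_sqrt)
  next
    case 3
    let ?z = "1 + real j / 2"
    have "Gamma (?z + 1) = ?z * Gamma ?z"
      by (rule Gamma_plus1) (auto dest: nonpos_Ints_nonpos)
    then have "Gamma (1 + real k / 2) = ?z * Gamma ?z"
      using 3 by (simp add: field_simps)
    also have "\<dots> \<le> ?z * ?z powr (real j / 2)"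
      using less[of j] 3 by (intro mult_left_mono) auto
    also have "\<dots> = ?z powr (real j / 2 + 1)"
      by (simp add: powr_add)
    also have "\<dots> \<le> (1 + real k / 2) powr (real j / 2 + 1)"
      using 3 by (intro powr_mono2) auto
    also have "real j / 2 + 1 = real k / 2" using 3 by simp
    finally show ?thesis .
  qed simp
qed

lemma Gamma_powr_loss_exponent_le:
  assumes "n \<ge> 2"
  shows "Gamma ((real n + 1) / 2) powr loss_exponent n \<le> (real n + 1) / 2"
proof -
  have "1 + real (n - 1) / 2 = (real n + 1) / 2" using assms by (simp add: of_nat_diff field_simps)
  then have "Gamma ((real n + 1) / 2) \<le> ((real n + 1) / 2) powr (real (n - 1) / 2)"
    using Gamma_one_plus_half_le[of "n - 1"] by (simp only:)
  then have "Gamma ((real n + 1) / 2) powr loss_exponent n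
      \<le> (((real n + 1) / 2) powr (real (n - 1) / 2)) powr loss_exponent n"
    using assms by (intro powr_mono2) (auto simp: loss_exponent_def Gamma_real_pos less_imp_le)
  also have "\<dots> = ((real n + 1) / 2) powr (real (n - 1) / 2 * loss_exponent n)"
    by (rule powr_powr)
  also have "real (n - 1) / 2 * loss_exponent n = 1"
    using assms by (simp add: loss_exponent_def of_nat_diff)
  also have "((real n + 1) / 2) powr 1 = (real n + 1) / 2" by simp
  finally show ?thesis .
qed

lemma sqrt_one_plus_le:
  fixes e :: real
  assumes "e \<ge> 0"
  shows "sqrt (1 + e) - 1 \<le> e / 2"
proof -
  have "1 + e \<le> (1 + e / 2)\<^sup>2" by (simp add: power2_sum)
  then show ?thesis using assms real_le_lsqrt[of "1 + e / 2" "1 + e"] by simp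
qed

lemma nu_bound:
  assumes "n \<ge> 2"
  shows "merge_loss_const n / loss_exponent n \<le> nu n"
proof -
  define N where "N = real n"
  define d where "d = loss_exponent n"
  define G where "G = Gamma ((N + 1) / 2)"
  define s where "s = sqrt (1 + 1 / (2 * (N - 1)))"
  have N: "N \<ge> 2" using assms by (simp add: N_def)
  have "d > 0" using N by (simp add: d_def loss_exponent_def N_def)
  have "G > 0" using N by (simp add: G_def Gamma_real_pos)
  have Gd: "G powr d \<le> (N + 1) / 2"
    using Gamma_powr_loss_exponent_le[OF assms] by (simp add: G_def d_def N_def)
  have "(2 * N / G) powr d = (2 * N) powr d / G powr d"
    using N \<open>G > 0\<close> by (simp add: powr_divide)
  also have "\<dots> \<ge> (2 * N) powr d / ((N + 1) / 2)"
    using Gd N \<open>G > 0\<close> by (intro divide_left_mono) auto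
  finally have gamma_part: "(2 * N / G) powr d \<ge> 2 * (2 * N) powr d / (N + 1)" by (simp add: mult.commute)
  have "s - 1 \<le> 1 / (4 * (N - 1))"
    using sqrt_one_plus_le[of "1 / (2 * (N - 1))"] N by (simp add: s_def)
  moreover have "s - 1 > 0" using N by (simp add: s_def)
  ultimately have "(s - 1)\<^sup>2 \<le> (1 / (4 * (N - 1)))\<^sup>2"
    by (intro power_mono) auto
  then have "8 * (N - 1)\<^sup>2 * (2 * (s - 1)\<^sup>2) \<le> 8 * (N - 1)\<^sup>2 * (2 * (1 / (4 * (N - 1)))\<^sup>2)"
    by (intro mult_left_mono) auto
  also have "\<dots> = 1"
  proof -
    have "8 * a\<^sup>2 * (2 * (1 / (4 * a))\<^sup>2) = 1" if "a \<noteq> 0" for a :: real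
      using that by (simp add: power2_eq_square)
    moreover have "N - 1 \<noteq> 0" using N by simp
    ultimately show ?thesis by blast
  qed
  finally have sqrt_part: "8 * (N - 1)\<^sup>2 \<le> 1 / (2 * (s - 1)\<^sup>2)"
    using \<open>s - 1 > 0\<close> by (simp add: le_divide_eq)
  have pi_part: "(N + 1)\<^sup>2 \<le> 2 * pi * N * (N - 1)"
  proof -
    have "2 * N \<le> N * N" using mult_right_mono[OF N, of N] N by simp
    moreover have "(N + 1)\<^sup>2 = N * N + 2 * N + 1" "6 * N * (N - 1) = 6 * (N * N) - 6 * N"
      by (simp_all add: power2_eq_square algebra_simps)
    ultimately have "(N + 1)\<^sup>2 \<le> 6 * N * (N - 1)" using N by linarith
    also have "\<dots> \<le> 2 * pi * N * (N - 1)"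
      using pi_gt3 N by (intro mult_right_mono) auto
    finally show ?thesis .
  qed
  have "merge_loss_const n / d = 8 * (N - 1)\<^sup>2 * (N + 1)\<^sup>2 * (2 * N) powr d / (N + 1)"
    using N by (simp add: merge_loss_const_def d_def loss_exponent_def N_def power2_eq_square field_simps)
  also have "\<dots> \<le> 8 * (N - 1)\<^sup>2 * (2 * pi * N * (N - 1)) * (2 * N) powr d / (N + 1)"
    using pi_part N by (intro divide_right_mono mult_right_mono mult_left_mono) auto
  also have "\<dots> = pi * N * (N - 1) * (8 * (N - 1)\<^sup>2) * (2 * (2 * N) powr d / (N + 1))"
    by (simp add: field_simps)
  also have "\<dots> \<le> pi * N * (N - 1) * (1 / (2 * (s - 1)\<^sup>2)) * (2 * N / G) powr d"
    using N sqrt_part gamma_part by (intro mult_mono mult_left_mono) auto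
  also have "\<dots> = nu n"
    by (simp add: nu_def N_def s_def G_def d_def loss_exponent_def field_simps)
  finally show ?thesis by (simp add: d_def)
qed

lemma root_powr_facts:
  fixes b :: real and k :: nat
  assumes "b \<ge> 1" "k \<ge> 1"
  shows "b powr (1 / real k) \<ge> 1" "(b powr (1 / real k)) ^ k = b"
    "(b powr (1 / real k))\<^sup>2 = b powr (2 / real k)"
proof -
  show "b powr (1 / real k) \<ge> 1" using assms by (intro ge_one_powr_ge_zero) auto
  have "(b powr (1 / real k)) ^ j = b powr (real j / real k)" for j
    using assms(1) by (simp add: powr_realpow[symmetric] powr_powr)
  from this[of k] this[of 2] show "(b powr (1 / real k)) ^ k = b"
    "(b powr (1 / real k))\<^sup>2 = b powr (2 / real k)"
    using assms by simp_all
qed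

lemma nat_floor_bounds:
  fixes r :: real
  assumes "r \<ge> 1"
  shows "nat \<lfloor>r\<rfloor> \<ge> 1" "real (nat \<lfloor>r\<rfloor>) \<le> r" "real (nat \<lfloor>r\<rfloor>) \<ge> r / 2"
proof -
  have "\<lfloor>r\<rfloor> \<ge> 1" "real_of_int \<lfloor>r\<rfloor> > r - 1" using assms by linarith+
  then show "nat \<lfloor>r\<rfloor> \<ge> 1" "real (nat \<lfloor>r\<rfloor>) \<le> r" "real (nat \<lfloor>r\<rfloor>) \<ge> r / 2"
    by linarith+
qed

lemma card_light_gt_half:
  fixes w :: "'a \<Rightarrow> real"
  assumes "finite P" "card P = M" "M > 0" "\<And>S. S \<in> P \<Longrightarrow> w S > 0" "sum w P = 1"
  shows "real M / 2 < real (card {S \<in> P. w S \<le> 2 / real M})"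
proof -
  let ?C = "{S \<in> P. w S > 2 / real M}"
  have "real (card ?C) < real M / 2"
  proof (cases "?C = {}")
    case False
    have "real (card ?C) * (2 / real M) = (\<Sum>S\<in>?C. 2 / real M)" by simp
    also have "\<dots> < sum w ?C"
      using False assms(1) by (intro sum_strict_mono) auto
    also have "\<dots> \<le> sum w P"
      using assms by (intro sum_mono2) (auto intro: less_imp_le)
    finally show ?thesis using assms(3,5) by (simp add: field_simps)
  next
    case True
    then have "card ?C = 0" by (simp only: card.empty)
    then show ?thesis using assms(3) by simp
  qed
  moreover have "{S \<in> P. w S \<le> 2 / real M} = P - ?C" by auto
  then have "card {S \<in> P. w S \<le> 2 / real M} = M - card ?C"
    using assms(1,2) by (simp add: card_Diff_subset)
  ultimately show ?thesis
    using card_mono[OF assms(1), of ?C] assms(2) by (simp add: of_nat_diff)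
qed

lemma exists_grid_resolution:
  fixes M n :: nat
  assumes "n \<ge> 2" "M > 2 * n"
  shows "\<exists>m \<ge> 1. real n * real m ^ (n - 1) \<le> real M / 2 \<and>
           4 / real M * (real (n + 1) * real (n - 1) / (real m)\<^sup>2)
             \<le> merge_loss_const n * real M powr (- 1 - loss_exponent n)"
proof -
  have b: "real M / (2 * real n) \<ge> 1" and k: "n - 1 \<ge> 1" using assms by (simp_all add: field_simps)
  define r where "r = (real M / (2 * real n)) powr (1 / real (n - 1))"
  note r = root_powr_facts[OF b k, folded r_def]
  define m where "m = nat \<lfloor>r\<rfloor>"
  note m = nat_floor_bounds[OF r(1), folded m_def]
  let ?d = "loss_exponent n"
  have "real m ^ (n - 1) \<le> r ^ (n - 1)" using m by (intro power_mono) auto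
  then have "real n * real m ^ (n - 1) \<le> real M / 2"
    using r(2) assms(1) mult_left_mono[of "real m ^ (n - 1)" "r ^ (n - 1)" "real n"] by simp
  moreover have "4 / real M * (real (n + 1) * real (n - 1) / (real m)\<^sup>2)
             \<le> merge_loss_const n * real M powr (- 1 - ?d)"
  proof -
    have M: "real M > 0" using assms by simp
    have "(r / 2)\<^sup>2 \<le> (real m)\<^sup>2" using m r(1) by (intro power_mono) auto
    then have "1 / (real m)\<^sup>2 \<le> 4 / r\<^sup>2"
      using m r(1) by (simp add: power_divide field_simps)
    also have "\<dots> = 4 * (2 * real n) powr ?d / real M powr ?d"
      using r(3) assms by (simp add: powr_divide loss_exponent_def of_nat_diff)
    finally have m2: "1 / (real m)\<^sup>2 \<le> 4 * (2 * real n) powr ?d / real M powr ?d" .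
    have nn: "real (n + 1) * real (n - 1) = (real n)\<^sup>2 - 1"
      using assms(1) by (simp add: of_nat_diff power2_eq_square algebra_simps)
    have "4 / real M * (real (n + 1) * real (n - 1) / (real m)\<^sup>2)
        = 4 * ((real n)\<^sup>2 - 1) / real M * (1 / (real m)\<^sup>2)"
      unfolding nn by simp
    also have "\<dots> \<le> 4 * ((real n)\<^sup>2 - 1) / real M * (4 * (2 * real n) powr ?d / real M powr ?d)"
      using M assms(1) by (intro mult_left_mono[OF m2]) (simp add: one_le_power)
    also have "\<dots> = merge_loss_const n * real M powr (- 1 - ?d)"
      using M by (simp add: merge_loss_const_def powr_diff powr_minus_divide field_simps)
    finally show ?thesis .
  qed
  ultimately show ?thesis using m(1) by blast
qed

section \<open>Merging blocks of a partition of the output alphabet\<close>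

lemma partition_on_merge_blocks:
  assumes "partition_on Y P" "A \<in> P" "B \<in> P"
  shows "partition_on Y (merge_blocks P A B)"
  using assms unfolding partition_on_def merge_blocks_def disjoint_def by auto

lemma union_notin_partition:
  assumes "partition_on Y P" "A \<in> P" "B \<in> P" "A \<noteq> B"
  shows "A \<union> B \<notin> P"
proof
  assume AB: "A \<union> B \<in> P"
  have "C = A \<union> B" if "C \<in> P" "C \<noteq> {}" "C \<subseteq> A \<union> B" for C
    using that AB partition_onD2[OF assms(1)] by (metis disjointD Int_absorb2)
  then have "A = A \<union> B" "B = A \<union> B"
    using assms partition_onD3[OF assms(1)] by auto
  then show False using assms(4) by simp
qed

lemma card_merge_blocks:
  assumes "finite P" "partition_on Y P" "A \<in> P" "B \<in> P" "A \<noteq> B"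
  shows "card (merge_blocks P A B) = card P - 1"
proof -
  have "card (merge_blocks P A B) = Suc (card (P - {A, B}))"
    using assms union_notin_partition[OF assms(2-5)] by (simp add: merge_blocks_def)
  also have "card (P - {A, B}) = card P - 2"
    using assms by (simp add: card_Diff_subset)
  finally show ?thesis
    using assms card_mono[of P "{A, B}"] by simp
qed

definition block_joint :: "('x \<Rightarrow> real) \<Rightarrow> ('x \<Rightarrow> 'y \<Rightarrow> real) \<Rightarrow> 'y set \<Rightarrow> 'x \<Rightarrow> real" where
  "block_joint p W S x = p x * merged_channel W x S"

definition block_weight :: "('x \<Rightarrow> real) \<Rightarrow> 'x set \<Rightarrow> ('x \<Rightarrow> 'y \<Rightarrow> real) \<Rightarrow> 'y set \<Rightarrow> real" where
  "block_weight p X W S = sum (block_joint p W S) X"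

definition root_profile :: "('x \<Rightarrow> real) \<Rightarrow> 'x set \<Rightarrow> ('x \<Rightarrow> 'y \<Rightarrow> real) \<Rightarrow> 'y set \<Rightarrow> 'x \<Rightarrow> real" where
  "root_profile p X W S x = sqrt (block_joint p W S x / block_weight p X W S)"

lemma block_weight_eq: "block_weight p X W S = (\<Sum>y\<in>S. out_prob p X W y)"
  unfolding block_weight_def block_joint_def merged_channel_def out_prob_def
  by (simp add: sum_distrib_left sum.swap[of _ S])

lemma block_joint_union:
  assumes "finite A" "finite B" "A \<inter> B = {}"
  shows "block_joint p W (A \<union> B) = (\<lambda>x. block_joint p W A x + block_joint p W B x)"
  using assms by (simp add: fun_eq_iff block_joint_def merged_channel_def sum.union_disjoint distrib_left)

lemma is_channel_compose:
  assumes "is_channel X Y W" "is_channel Y Z \<Phi>"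
  shows "is_channel X Z (\<lambda>x z. \<Sum>y\<in>Y. W x y * \<Phi> y z)"
  unfolding is_channel_def
proof (intro ballI conjI)
  fix x z assume "x \<in> X" "z \<in> Z"
  then show "(\<Sum>y\<in>Y. W x y * \<Phi> y z) \<ge> 0"
    using assms unfolding is_channel_def by (simp add: sum_nonneg)
next
  fix x assume x: "x \<in> X"
  have "(\<Sum>z\<in>Z. \<Sum>y\<in>Y. W x y * \<Phi> y z) = (\<Sum>y\<in>Y. W x y * (\<Sum>z\<in>Z. \<Phi> y z))"
    by (simp add: sum.swap[of _ Z Y] sum_distrib_left)
  also have "\<dots> = 1"
    using assms x unfolding is_channel_def by simp
  finally show "(\<Sum>z\<in>Z. \<Sum>y\<in>Y. W x y * \<Phi> y z) = 1" .
qed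

lemma greedy_step_merges:
  assumes "greedy_step p X W P P'"
  obtains A B where "A \<in> P" "B \<in> P" "A \<noteq> B" "P' = merge_blocks P A B"
    "\<And>A' B'. A' \<in> P \<Longrightarrow> B' \<in> P \<Longrightarrow> A' \<noteq> B' \<Longrightarrow>
       mutual_info p X P' (merged_channel W) \<ge> mutual_info p X (merge_blocks P A' B') (merged_channel W)"
  using assms unfolding greedy_step_def by force

lemma greedy_step_exists:
  assumes "finite P" "card P \<ge> 2"
  shows "\<exists>P'. greedy_step p X W P P'"
proof -
  define pairs where "pairs = {q \<in> P \<times> P. fst q \<noteq> snd q}"
  define loss where "loss q = mutual_info p X P (merged_channel W)
    - mutual_info p X (merge_blocks P (fst q) (snd q)) (merged_channel W)" for q
  have "finite pairs" using assms(1) by (simp add: pairs_def)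
  moreover have "pairs \<noteq> {}"
  proof -
    have "\<not> card P \<le> Suc 0" using assms(2) by simp
    then obtain A B where "A \<in> P" "B \<in> P" "A \<noteq> B"
      using card_le_Suc0_iff_eq[OF assms(1)] by blast
    then show ?thesis by (auto simp: pairs_def)
  qed
  ultimately obtain q where "is_arg_min loss (\<lambda>q. q \<in> pairs) q"
    using ex_is_arg_min_if_finite by blast
  then have "q \<in> pairs" "\<forall>q'\<in>pairs. loss q \<le> loss q'"
    by (auto simp: is_arg_min_linorder)
  then have "greedy_step p X W P (merge_blocks P (fst q) (snd q))"
    unfolding greedy_step_def pairs_def loss_def by fastforce
  then show ?thesis ..
qed

section \<open>Greedy merging\<close>

locale dmc =
  fixes p :: "'x \<Rightarrow> real" and X :: "'x set" and Y :: "'y set" and W :: "'x \<Rightarrow> 'y \<Rightarrow> real"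
  assumes finite_X: "finite X" and finite_Y: "finite Y"
    and channel: "is_channel X Y W"
    and input_pos: "\<forall>x\<in>X. p x > 0" and input_sum: "(\<Sum>x\<in>X. p x) = 1"
    and output_pos: "\<forall>y\<in>Y. out_prob p X W y > 0"
begin

lemma mutual_info_merged:
  "mutual_info p X P (merged_channel W) = (\<Sum>S\<in>P. letter_info p X (block_joint p W S))"
  unfolding block_joint_def by (rule mutual_info_eq_sum_letter_info[OF input_pos])

lemma mutual_info_singletons:
  "mutual_info p X ((\<lambda>y. {y}) ` Y) (merged_channel W) = mutual_info p X Y W"
  by (simp add: mutual_info_merged mutual_info_eq_sum_letter_info[OF input_pos] sum.reindex
      block_joint_def merged_channel_def)

lemma block_joint_nonneg: "S \<subseteq> Y \<Longrightarrow> x \<in> X \<Longrightarrow> block_joint p W S x \<ge> 0"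
  using channel input_pos unfolding block_joint_def merged_channel_def is_channel_def
  by (intro mult_nonneg_nonneg sum_nonneg) (auto simp: less_imp_le)

lemma block_weight_pos: "S \<subseteq> Y \<Longrightarrow> S \<noteq> {} \<Longrightarrow> block_weight p X W S > 0"
  unfolding block_weight_eq using output_pos finite_Y
  by (intro sum_pos) (auto intro: finite_subset)

lemma sum_block_weights:
  assumes "partition_on Y P"
  shows "(\<Sum>S\<in>P. block_weight p X W S) = 1"
proof -
  have "(\<Sum>S\<in>P. block_weight p X W S) = (\<Sum>y\<in>\<Union>P. out_prob p X W y)"
    unfolding block_weight_eq using partition_onD2[OF assms] finite_Y partition_onD1[OF assms]
    by (subst sum.Union_disjoint) (auto simp: disjoint_def intro: finite_subset)
  also have "\<dots> = (\<Sum>x\<in>X. p x * (\<Sum>y\<in>Y. W x y))"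
    unfolding partition_onD1[OF assms, symmetric] out_prob_def
    by (simp add: sum_distrib_left sum.swap[of _ Y])
  also have "\<dots> = 1"
    using channel input_sum unfolding is_channel_def by simp
  finally show ?thesis .
qed

lemma root_profile_nonneg: "S \<subseteq> Y \<Longrightarrow> S \<noteq> {} \<Longrightarrow> x \<in> X \<Longrightarrow> root_profile p X W S x \<ge> 0"
  unfolding root_profile_def by (intro real_sqrt_ge_zero divide_nonneg_pos block_joint_nonneg block_weight_pos)

lemma sum_root_profile_sq:
  assumes "S \<subseteq> Y" "S \<noteq> {}"
  shows "(\<Sum>x\<in>X. (root_profile p X W S x)\<^sup>2) = 1"
proof -
  have "(\<Sum>x\<in>X. (root_profile p X W S x)\<^sup>2) = (\<Sum>x\<in>X. block_joint p W S x / block_weight p X W S)"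
    using block_joint_nonneg[OF assms(1)] block_weight_pos[OF assms]
    by (intro sum.cong) (auto simp: root_profile_def)
  also have "\<dots> = 1"
    using block_weight_pos[OF assms] by (simp add: block_weight_def sum_divide_distrib[symmetric])
  finally show ?thesis .
qed

lemma merge_blocks_loss:
  assumes "partition_on Y P" "A \<in> P" "B \<in> P" "A \<noteq> B"
  shows "mutual_info p X P (merged_channel W) - mutual_info p X (merge_blocks P A B) (merged_channel W)
    = letter_info p X (block_joint p W A) + letter_info p X (block_joint p W B)
      - letter_info p X (\<lambda>x. block_joint p W A x + block_joint p W B x)"
proof -
  have "A \<subseteq> Y" "B \<subseteq> Y" using assms by (auto simp: partition_on_def)
  then have fin: "finite P" "finite A" "finite B"
    using assms finite_Y finite_elements[OF finite_Y] by (auto intro: finite_subset)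
  let ?g = "\<lambda>S. letter_info p X (block_joint p W S)"
  have "A \<inter> B = {}" by (rule disjointD[OF partition_onD2[OF assms(1)] assms(2-4)])
  then have "?g (A \<union> B) = letter_info p X (\<lambda>x. block_joint p W A x + block_joint p W B x)"
    by (simp add: block_joint_union[OF fin(2,3)])
  moreover have "sum ?g (merge_blocks P A B) = ?g (A \<union> B) + sum ?g (P - {A, B})"
    using union_notin_partition[OF assms] fin(1) by (simp add: merge_blocks_def)
  moreover have "sum ?g P = sum ?g (P - {A, B}) + (?g A + ?g B)"
    using sum.subset_diff[of "{A, B}" P ?g] assms fin(1) by simp
  ultimately show ?thesis
    unfolding mutual_info_merged by simp
qed

lemma merge_blocks_loss_le:
  assumes "partition_on Y P" "A \<in> P" "B \<in> P" "A \<noteq> B"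
  shows "mutual_info p X P (merged_channel W) - mutual_info p X (merge_blocks P A B) (merged_channel W)
    \<le> 2 * max (block_weight p X W A) (block_weight p X W B)
        * (\<Sum>x\<in>X. (root_profile p X W A x - root_profile p X W B x)\<^sup>2)"
proof -
  have "A \<subseteq> Y" "A \<noteq> {}" "B \<subseteq> Y" "B \<noteq> {}"
    using assms by (auto simp: partition_on_def)
  note nonneg = block_joint_nonneg[OF \<open>A \<subseteq> Y\<close>] block_joint_nonneg[OF \<open>B \<subseteq> Y\<close>]
    and pos = block_weight_pos[OF \<open>A \<subseteq> Y\<close> \<open>A \<noteq> {}\<close>] block_weight_pos[OF \<open>B \<subseteq> Y\<close> \<open>B \<noteq> {}\<close>]
  show ?thesis
    unfolding merge_blocks_loss[OF assms] root_profile_def block_weight_def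
    using nonneg pos[unfolded block_weight_def]
    by (intro merge_loss_le_hellinger[OF finite_X input_pos]) auto
qed

lemma exists_cheap_merge:
  assumes "card X \<ge> 2" "partition_on Y P" "card P = M" "M > 2 * card X"
  shows "\<exists>A\<in>P. \<exists>B\<in>P. A \<noteq> B \<and>
    mutual_info p X P (merged_channel W) - mutual_info p X (merge_blocks P A B) (merged_channel W)
      \<le> merge_loss_const (card X) * real M powr (- 1 - loss_exponent (card X))"
proof -
  let ?n = "card X" and ?w = "block_weight p X W" and ?u = "root_profile p X W"
  define light where "light = {S \<in> P. ?w S \<le> 2 / real M}"
  have block: "S \<subseteq> Y" "S \<noteq> {}" if "S \<in> P" for S
    using assms(2) that by (auto simp: partition_on_def)
  have "finite P" using finite_elements[OF finite_Y assms(2)] .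
  then have "finite light" by (simp add: light_def)
  have "real M / 2 < real (card light)"
    unfolding light_def using assms(3,4) block_weight_pos block sum_block_weights[OF assms(2)]
    by (intro card_light_gt_half[OF \<open>finite P\<close>]) auto
  moreover obtain m where m: "m \<ge> 1" "real ?n * real m ^ (?n - 1) \<le> real M / 2"
    and m_loss: "4 / real M * (real (?n + 1) * real (?n - 1) / (real m)\<^sup>2)
             \<le> merge_loss_const ?n * real M powr (- 1 - loss_exponent ?n)"
    using exists_grid_resolution[OF assms(1,4)] by blast
  ultimately have "real (?n * m ^ (?n - 1)) < real (card light)"
    by (simp only: of_nat_mult of_nat_power)
  then have many: "card light > ?n * m ^ (?n - 1)"
    by (simp only: of_nat_less_iff)
  have nonneg: "\<forall>S\<in>light. \<forall>x\<in>X. ?u S x \<ge> 0"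
    using root_profile_nonneg block by (auto simp: light_def)
  have unit: "\<forall>S\<in>light. (\<Sum>x\<in>X. (?u S x)\<^sup>2) = 1"
    using sum_root_profile_sq block by (auto simp: light_def)
  obtain A B where AB: "A \<in> light" "B \<in> light" "A \<noteq> B"
    and close: "(\<Sum>x\<in>X. (?u A x - ?u B x)\<^sup>2) \<le> real (?n + 1) * real (?n - 1) / (real m)\<^sup>2"
    using exists_close_unit_vectors[OF finite_X refl assms(1) \<open>finite light\<close> m(1) nonneg unit many]
    by blast
  then have "A \<in> P" "B \<in> P" "?w A \<le> 2 / real M" "?w B \<le> 2 / real M" by (auto simp: light_def)
  have "mutual_info p X P (merged_channel W) - mutual_info p X (merge_blocks P A B) (merged_channel W)
      \<le> 2 * max (?w A) (?w B) * (\<Sum>x\<in>X. (?u A x - ?u B x)\<^sup>2)"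
    by (rule merge_blocks_loss_le[OF assms(2) \<open>A \<in> P\<close> \<open>B \<in> P\<close> AB(3)])
  also have "\<dots> \<le> 4 / real M * (real (?n + 1) * real (?n - 1) / (real m)\<^sup>2)"
    using \<open>?w A \<le> _\<close> \<open>?w B \<le> _\<close> close by (intro mult_mono) (auto simp: sum_nonneg)
  also have "\<dots> \<le> merge_loss_const ?n * real M powr (- 1 - loss_exponent ?n)"
    by (rule m_loss)
  finally show ?thesis using \<open>A \<in> P\<close> \<open>B \<in> P\<close> AB(3) by blast
qed

lemma exists_degraded_relabelling:
  assumes "partition_on Y P"
  shows "\<exists>(Z :: nat set) Q. finite Z \<and> card Z = card P \<and> is_channel X Z Q \<and> degraded X Y Z Q W
           \<and> mutual_info p X Z Q = mutual_info p X P (merged_channel W)"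
proof -
  have finP: "finite P" using finite_elements[OF finite_Y assms] .
  obtain g where g: "bij_betw g {..<card P} P"
    using ex_bij_betw_nat_finite[OF finP] by (auto simp: atLeast0LessThan)
  define Z where "Z = {..<card P}"
  define \<Phi> where "\<Phi> y z = (of_bool (y \<in> g z) :: real)" for y z
  define Q where "Q x z = (\<Sum>y\<in>Y. W x y * \<Phi> y z)" for x z
  have reindex: "(\<Sum>z\<in>Z. h (g z)) = (\<Sum>S\<in>P. h S)" for h :: "'y set \<Rightarrow> real"
    unfolding Z_def by (rule sum.reindex_bij_betw[OF g])
  have block: "g z \<subseteq> Y" if "z \<in> Z" for z
    using g that assms by (auto simp: Z_def bij_betw_def partition_on_def)
  have "is_channel Y Z \<Phi>"
    unfolding is_channel_def
  proof (intro ballI conjI)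
    fix y assume "y \<in> Y"
    then obtain S0 where S0: "S0 \<in> P" "y \<in> S0" using assms by (auto simp: partition_on_def)
    have "P \<inter> {S. y \<in> S} = {S0}"
      using S0 disjointD[OF partition_onD2[OF assms]] by blast
    then show "(\<Sum>z\<in>Z. \<Phi> y z) = 1"
      unfolding \<Phi>_def using reindex[of "\<lambda>S. of_bool (y \<in> S)"] finP by simp
  qed (simp add: \<Phi>_def)
  then have chan: "is_channel X Z Q" and deg: "degraded X Y Z Q W"
    using is_channel_compose[OF channel] unfolding degraded_def Q_def by blast+
  have info: "mutual_info p X Z Q = mutual_info p X P (merged_channel W)"
  proof -
    have "Q x z = merged_channel W x (g z)" if "z \<in> Z" for x z
    proof -
      have "Y \<inter> {y. y \<in> g z} = g z" using block[OF that] by auto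
      then show ?thesis
        unfolding Q_def \<Phi>_def merged_channel_def sum_mult_of_bool_eq[OF finite_Y] by simp
    qed
    then have "mutual_info p X Z Q = (\<Sum>z\<in>Z. letter_info p X (block_joint p W (g z)))"
      unfolding mutual_info_eq_sum_letter_info[OF input_pos] block_joint_def
      by (intro sum.cong) simp_all
    then show ?thesis
      unfolding mutual_info_merged using reindex[of "\<lambda>S. letter_info p X (block_joint p W S)"] by simp
  qed
  have "finite Z" "card Z = card P" by (simp_all add: Z_def)
  with chan deg info show ?thesis by blast
qed

lemma greedy_reach_partition: "greedy_reach p X Y W L P \<Longrightarrow> partition_on Y P"
proof (induction rule: greedy_reach.induct)
  case init
  show ?case by (rule partition_on_singletons)
next
  case (step P P')
  from step.hyps(3) obtain A B where "A \<in> P" "B \<in> P" "P' = merge_blocks P A B"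
    by (rule greedy_step_merges)
  with step.IH show ?case by (simp add: partition_on_merge_blocks)
qed

lemma card_greedy_step:
  assumes "greedy_reach p X Y W L P" "greedy_step p X W P P'"
  shows "card P' = card P - 1"
proof -
  from assms(2) obtain A B where "A \<in> P" "B \<in> P" "A \<noteq> B" "P' = merge_blocks P A B"
    by (rule greedy_step_merges)
  with greedy_reach_partition[OF assms(1)] show ?thesis
    using card_merge_blocks finite_elements[OF finite_Y] by blast
qed

lemma greedy_reach_singletons_or_large:
  "greedy_reach p X Y W L P \<Longrightarrow> P = (\<lambda>y. {y}) ` Y \<or> card P \<ge> L"
proof (induction rule: greedy_reach.induct)
  case (step P P')
  then show ?case using card_greedy_step by fastforce
qed simp

lemma greedy_reach_loss_le:
  assumes "card X \<ge> 2" "2 * card X \<le> L" "greedy_reach p X Y W L P"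
  shows "mutual_info p X Y W - mutual_info p X P (merged_channel W)
    \<le> merge_loss_const (card X) / loss_exponent (card X)
        * (real (card P) powr - loss_exponent (card X) - real (card Y) powr - loss_exponent (card X))"
  using assms(3)
proof (induction rule: greedy_reach.induct)
  case init
  show ?case by (simp add: mutual_info_singletons card_image)
next
  case (step P P')
  let ?d = "loss_exponent (card X)" and ?K = "merge_loss_const (card X)"
  define M where "M = card P"
  have d: "?d > 0" and K: "?K \<ge> 0"
    using assms(1) by (simp_all add: loss_exponent_def merge_loss_const_def one_le_power)
  have M: "M > 2 * card X" "real M > 1" using step.hyps(2) assms by (simp_all add: M_def)
  have part: "partition_on Y P" using greedy_reach_partition[OF step.hyps(1)] .
  have greedy: "mutual_info p X P' (merged_channel W) \<ge> mutual_info p X (merge_blocks P A' B') (merged_channel W)"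
    if "A' \<in> P" "B' \<in> P" "A' \<noteq> B'" for A' B'
    using greedy_step_merges[OF step.hyps(3)] that by blast
  obtain A' B' where "A' \<in> P" "B' \<in> P" "A' \<noteq> B'"
    and cheap: "mutual_info p X P (merged_channel W) - mutual_info p X (merge_blocks P A' B') (merged_channel W)
      \<le> ?K * real M powr (- 1 - ?d)"
    using exists_cheap_merge[OF assms(1) part M_def[symmetric] M(1)] by blast
  have "mutual_info p X P (merged_channel W) - mutual_info p X P' (merged_channel W)
      \<le> ?K * real M powr (- 1 - ?d)"
    using cheap greedy[OF \<open>A' \<in> P\<close> \<open>B' \<in> P\<close> \<open>A' \<noteq> B'\<close>] by linarith
  also have "\<dots> = ?K / ?d * (?d * real M powr (- 1 - ?d))" using d by simp
  also have "\<dots> \<le> ?K / ?d * ((real M - 1) powr - ?d - real M powr - ?d)"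
    using K d by (intro mult_left_mono powr_neg_decrement_ge M(2)) auto
  finally show ?case
    using step.IH card_greedy_step[OF step.hyps(1,3)] M
    by (simp add: M_def of_nat_diff algebra_simps)
qed

lemma greedy_merge_output_exists:
  assumes "L \<ge> 1"
  shows "\<exists>P. greedy_merge_output p X Y W L P"
proof -
  have "\<exists>P'. greedy_merge_output p X Y W L P'" if "greedy_reach p X Y W L P" for P
    using that
  proof (induction "card P" arbitrary: P rule: less_induct)
    case less
    show ?case
    proof (cases "card P \<le> L")
      case True
      with less.prems show ?thesis by (auto simp: greedy_merge_output_def)
    next
      case False
      have "finite P"
        using finite_elements[OF finite_Y greedy_reach_partition[OF less.prems]] .
      then obtain P' where step: "greedy_step p X W P P'"
        using greedy_step_exists False assms by fastforce
      then have "greedy_reach p X Y W L P'"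
        using greedy_reach.step[OF less.prems] False by simp
      moreover have "card P' < card P"
        using card_greedy_step[OF less.prems step] False by simp
      ultimately show ?thesis using less.hyps by blast
    qed
  qed
  then show ?thesis using greedy_reach.init by blast
qed

lemma greedy_merge_output_loss_le:
  assumes "card X \<ge> 2" "2 * card X \<le> L" "greedy_merge_output p X Y W L P"
  shows "mutual_info p X Y W - mutual_info p X P (merged_channel W)
    \<le> nu (card X) * real L powr - loss_exponent (card X)"
proof -
  let ?d = "loss_exponent (card X)" and ?K = "merge_loss_const (card X)"
  have reach: "greedy_reach p X Y W L P" and "card P \<le> L"
    using assms(3) by (auto simp: greedy_merge_output_def)
  have "?d > 0" "?K \<ge> 0"
    using assms(1) by (simp_all add: loss_exponent_def merge_loss_const_def one_le_power)
  then have nu: "0 \<le> ?K / ?d" "?K / ?d \<le> nu (card X)"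
    using nu_bound[OF assms(1)] by simp_all
  consider "P = (\<lambda>y. {y}) ` Y" | "card P = L"
    using greedy_reach_singletons_or_large[OF reach] \<open>card P \<le> L\<close> by fastforce
  then show ?thesis
  proof cases
    case 1
    then show ?thesis using nu by (simp add: mutual_info_singletons)
  next
    case 2
    have "mutual_info p X Y W - mutual_info p X P (merged_channel W)
        \<le> ?K / ?d * (real L powr - ?d - real (card Y) powr - ?d)"
      using greedy_reach_loss_le[OF assms(1,2) reach] 2 by simp
    also have "\<dots> \<le> ?K / ?d * real L powr - ?d"
      using nu(1) by (intro mult_left_mono) auto
    also have "\<dots> \<le> nu (card X) * real L powr - ?d"
      using nu(2) by (intro mult_right_mono) auto
    finally show ?thesis .
  qed
qed

end

theorem theorem1:
  fixes X :: "'x set" and Y :: "'y set" and W :: "'x \<Rightarrow> 'y \<Rightarrow> real"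
    and p :: "'x \<Rightarrow> real" and L :: nat
  assumes "finite X" and "finite Y" and "card X \<ge> 2"
    and "is_channel X Y W"
    and "\<forall>x\<in>X. p x > 0" and "(\<Sum>x\<in>X. p x) = 1"
    and "\<forall>y\<in>Y. out_prob p X W y > 0"
    and "card Y > 2 * card X"
    and "L \<ge> 2 * card X"
  shows "(\<exists>(Z :: nat set) Q. finite Z \<and> card Z \<le> L \<and> is_channel X Z Q \<and> degraded X Y Z Q W \<and>
            mutual_info p X Y W - mutual_info p X Z Q
              \<le> nu (card X) * real L powr (- 2 / (real (card X) - 1)))
       \<and> (\<forall>P. greedy_merge_output p X Y W L P \<longrightarrow>
            mutual_info p X Y W - mutual_info p X P (merged_channel W)
              \<le> nu (card X) * real L powr (- 2 / (real (card X) - 1)))"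
proof -
  interpret dmc p X Y W using assms(1,2,4-7) by unfold_locales
  have exponent: "- 2 / (real (card X) - 1) = - loss_exponent (card X)"
    by (simp add: loss_exponent_def)
  have greedy: "mutual_info p X Y W - mutual_info p X P (merged_channel W)
      \<le> nu (card X) * real L powr - loss_exponent (card X)"
    if "greedy_merge_output p X Y W L P" for P
    using greedy_merge_output_loss_le[OF assms(3,9) that] .
  obtain P where P: "greedy_merge_output p X Y W L P"
    using greedy_merge_output_exists assms(3,9) by fastforce
  then have "partition_on Y P" "card P \<le> L"
    using greedy_reach_partition by (auto simp: greedy_merge_output_def)
  then obtain Z :: "nat set" and Q where "finite Z \<and> card Z = card P \<and> is_channel X Z Q \<and> degraded X Y Z Q W
      \<and> mutual_info p X Z Q = mutual_info p X P (merged_channel W)"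
    using exists_degraded_relabelling by blast
  then have "\<exists>(Z :: nat set) Q. finite Z \<and> card Z \<le> L \<and> is_channel X Z Q \<and> degraded X Y Z Q W \<and>
      mutual_info p X Y W - mutual_info p X Z Q \<le> nu (card X) * real L powr - loss_exponent (card X)"
    using \<open>card P \<le> L\<close> greedy[OF P] by (intro exI[of _ Z] exI[of _ Q]) simp
  with greedy show ?thesis
    unfolding exponent by blast
qed

end
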